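(* Let $(R,[\cdot_\lambda\cdot],\alpha,\beta)$ be a BiHom-Lie conformal superalgebra and let $\alpha',\beta':R\to R$ be two even homomorphisms of conformal algebras (i.e. linear maps commuting with $\partial$ and satisfying $\alpha'([a_\lambda b])=[\alpha'(a)_\lambda\alpha'(b)]$, $\beta'([a_\lambda b])=[\beta'(a)_\lambda\beta'(b)]$) such that any two of the maps $\alpha,\beta,\alpha',\beta'$ commute. Then $(R,[\cdot_\lambda\cdot]',\alpha\circ\alpha',\beta\circ\beta')$, where $[a_\lambda b]'=[\alpha'(a)_\lambda\beta'(b)]$, is a BiHom-Lie conformal superalgebra.
   Context: All spaces are over $\mathbb{C}$. For a $\mathbb{C}[\partial]$-module $V$, $V[\lambda]=\mathbb{C}[\lambda]\otimes V$. $|a|$ denotes the parity of a homogeneous element. In $[x_{-\lambda-\partial}y]$ one writes $[x_\lambda y]=\sum_n\lambda^nc_n$ and replaces $\lambda$ by $-\lambda-\partial$, $\partial$ acting on the $c_n$. A BiHom-Lie conformal superalgebra $(R,[\cdot_\lambda\cdot],\alpha,\beta)$ is a $\mathbb{Z}_2$-graded $\mathbb{C}[\partial]$-module $R=R_0\oplus R_1$ with two commuting linear maps $\alpha,\beta:R\to R$ and a $\mathbb{C}$-linear map $R\otimes R\to R[\lambda]$, $a\otimes b\mapsto[a_\lambda b]$, with $[R_{i\,\lambda}R_j]\subseteq R_{i+j}[\lambda]$, such that for all homogeneous $a,b,c\in R$: (1) $\alpha\partial=\partial\alpha$, $\beta\partial=\partial\beta$; (2) $\alpha([a_\lambda b])=[\alpha(a)_\lambda\alpha(b)]$,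 $\beta([a_\lambda b])=[\beta(a)_\lambda\beta(b)]$; (3) $[(\partial a)_\lambda b]=-\lambda[a_\lambda b]$, $[a_\lambda(\partial b)]=(\partial+\lambda)[a_\lambda b]$; (4) $[\beta(a)_\lambda\alpha(b)]=-(-1)^{|a||b|}[\beta(b)_{-\lambda-\partial}\alpha(a)]$; (5) $[\alpha\beta(a)_\lambda[b_\mu c]]=[[\beta(a)_\lambda b]_{\lambda+\mu}\beta(c)]+(-1)^{|a||b|}[\beta(b)_\mu[\alpha(a)_\lambda c]]$. *)

theory Defs
  imports Complex_Main
begin

text \<open>R is a type 'a with a complex vector space structure given by scale.
  Elements of R[lambda] are represented by their coefficient sequences
  (nat => 'a, coefficient of lambda^n), required to be finitely supported.
  A polynomial in two variables lambda, mu is represented by its coefficient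
  function (i, j) => coefficient of lambda^i mu^j.
  The Z2-grading is Rg :: bool => 'a set, Rg False = R_0, Rg True = R_1;
  the parity of a homogeneous element of Rg p is p, and (-1)^(|a||b|) is
  (if p and q then -1 else 1).  D is the action of the derivation partial.\<close>

definition fin_supp :: "(nat \<Rightarrow> 'a::zero) \<Rightarrow> bool" where
  "fin_supp c \<longleftrightarrow> finite {n. c n \<noteq> 0}"

definition lam_mul :: "(nat \<Rightarrow> 'a::zero) \<Rightarrow> nat \<Rightarrow> 'a" where
  "lam_mul c n = (if n = 0 then 0 else c (n - 1))"

text \<open>Given the coefficients c_m of a polynomial sum_m lambda^m c_m, the
  coefficient of lambda^n in sum_m (-lambda-D)^m c_m, where D acts on c_m:
  (-lambda-D)^m = (-1)^m sum_k (m choose k) lambda^k D^(m-k).\<close>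
definition neg_lam_D ::
  "(complex \<Rightarrow> 'a::ab_group_add \<Rightarrow> 'a) \<Rightarrow> ('a \<Rightarrow> 'a) \<Rightarrow> (nat \<Rightarrow> 'a) \<Rightarrow> nat \<Rightarrow> 'a" where
  "neg_lam_D scale D c n =
     (\<Sum>m\<in>{m. c m \<noteq> 0}. scale ((-1) ^ m * of_nat (m choose n)) ((D ^^ (m - n)) (c m)))"

text \<open>Coefficient of lambda^i mu^j in [[x_lambda y]_(lambda+mu) z]:
  writing [x_lambda y] = sum_k lambda^k d_k and [d_k nu z] = sum_l nu^l e_(k,l),
  it is sum_(k<=i) ((i-k+j) choose j) e_(k, i-k+j).\<close>
definition jac_left ::
  "(complex \<Rightarrow> 'a::ab_group_add \<Rightarrow> 'a) \<Rightarrow> ('a \<Rightarrow> 'a \<Rightarrow> nat \<Rightarrow> 'a) \<Rightarrow> 'a \<Rightarrow> 'a \<Rightarrow> 'a \<Rightarrow> nat \<Rightarrow> nat \<Rightarrow> 'a" where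
  "jac_left scale br x y z i j =
     (\<Sum>k\<le>i. scale (of_nat ((i - k + j) choose j)) (br (br x y k) z (i - k + j)))"

definition sgn2 :: "bool \<Rightarrow> bool \<Rightarrow> complex" where
  "sgn2 p q = (if p \<and> q then -1 else 1)"

definition graded_Dmodule ::
  "(complex \<Rightarrow> 'a::ab_group_add \<Rightarrow> 'a) \<Rightarrow> ('a \<Rightarrow> 'a) \<Rightarrow> (bool \<Rightarrow> 'a set) \<Rightarrow> bool" where
  "graded_Dmodule scale D Rg \<longleftrightarrow>
     vector_space scale \<and> Vector_Spaces.linear scale scale D \<and>
     (\<forall>p. module.subspace scale (Rg p)) \<and>
     (\<forall>p. \<forall>a\<in>Rg p. D a \<in> Rg p) \<and>
     Rg False \<inter> Rg True = {0} \<and>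
     (\<forall>x. \<exists>x0\<in>Rg False. \<exists>x1\<in>Rg True. x = x0 + x1)"

definition BiHom_LCSA ::
  "(complex \<Rightarrow> 'a::ab_group_add \<Rightarrow> 'a) \<Rightarrow> ('a \<Rightarrow> 'a) \<Rightarrow> (bool \<Rightarrow> 'a set) \<Rightarrow>
   ('a \<Rightarrow> 'a \<Rightarrow> nat \<Rightarrow> 'a) \<Rightarrow> ('a \<Rightarrow> 'a) \<Rightarrow> ('a \<Rightarrow> 'a) \<Rightarrow> bool" where
  "BiHom_LCSA scale D Rg br \<alpha> \<beta> \<longleftrightarrow>
     graded_Dmodule scale D Rg \<and>
     \<comment> \<open>alpha, beta commuting linear maps\<close>
     Vector_Spaces.linear scale scale \<alpha> \<and> Vector_Spaces.linear scale scale \<beta> \<and>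
     \<alpha> \<circ> \<beta> = \<beta> \<circ> \<alpha> \<and>
     \<comment> \<open>the lambda-bracket: C-bilinear map R x R -> R[lambda]\<close>
     (\<forall>a b. fin_supp (br a b)) \<and>
     (\<forall>a b c. br (a + b) c = (\<lambda>n. br a c n + br b c n)) \<and>
     (\<forall>a b c. br a (b + c) = (\<lambda>n. br a b n + br a c n)) \<and>
     (\<forall>k a b. br (scale k a) b = (\<lambda>n. scale k (br a b n))) \<and>
     (\<forall>k a b. br a (scale k b) = (\<lambda>n. scale k (br a b n))) \<and>
     \<comment> \<open>grading of the bracket\<close>
     (\<forall>p q. \<forall>a\<in>Rg p. \<forall>b\<in>Rg q. \<forall>n. br a b n \<in> Rg (p \<noteq> q)) \<and>
     \<comment> \<open>(1)\<close>
     \<alpha> \<circ> D = D \<circ> \<alpha> \<and> \<beta> \<circ> D = D \<circ> \<beta> \<and>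
     \<comment> \<open>(2)\<close>
     (\<forall>a b n. \<alpha> (br a b n) = br (\<alpha> a) (\<alpha> b) n) \<and>
     (\<forall>a b n. \<beta> (br a b n) = br (\<beta> a) (\<beta> b) n) \<and>
     \<comment> \<open>(3)\<close>
     (\<forall>a b. br (D a) b = (\<lambda>n. - lam_mul (br a b) n)) \<and>
     (\<forall>a b. br a (D b) = (\<lambda>n. D (br a b n) + lam_mul (br a b) n)) \<and>
     \<comment> \<open>(4) skew-symmetry\<close>
     (\<forall>p q. \<forall>a\<in>Rg p. \<forall>b\<in>Rg q.
        br (\<beta> a) (\<alpha> b) = (\<lambda>n. scale (- sgn2 p q) (neg_lam_D scale D (br (\<beta> b) (\<alpha> a)) n))) \<and>
     \<comment> \<open>(5) BiHom-Jacobi identity, compared coefficientwise in lambda^i mu^j\<close>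
     (\<forall>p q r. \<forall>a\<in>Rg p. \<forall>b\<in>Rg q. \<forall>c\<in>Rg r. \<forall>i j.
        br (\<alpha> (\<beta> a)) (br b c j) i =
          jac_left scale br (\<beta> a) b (\<beta> c) i j
          + scale (sgn2 p q) (br (\<beta> b) (br (\<alpha> a) c i) j))"

definition even_conf_hom ::
  "(complex \<Rightarrow> 'a::ab_group_add \<Rightarrow> 'a) \<Rightarrow> ('a \<Rightarrow> 'a) \<Rightarrow> (bool \<Rightarrow> 'a set) \<Rightarrow>
   ('a \<Rightarrow> 'a \<Rightarrow> nat \<Rightarrow> 'a) \<Rightarrow> ('a \<Rightarrow> 'a) \<Rightarrow> bool" where
  "even_conf_hom scale D Rg br f \<longleftrightarrow>
     Vector_Spaces.linear scale scale f \<and> f \<circ> D = D \<circ> f \<and>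
     (\<forall>p. \<forall>a\<in>Rg p. f a \<in> Rg p) \<and>
     (\<forall>a b n. f (br a b n) = br (f a) (f b) n)"

end

theory Submission
  imports Defs
begin

text \<open>The twisted bracket \<open>[a\<^sub>\<lambda> b]' = [\<alpha>' a\<^sub>\<lambda> \<beta>' b]\<close>, evaluated at the new structure maps,
  is the old bracket evaluated at shifted elements: as \<open>\<alpha>'\<close>, \<open>\<beta>'\<close> are bracket homomorphisms
  commuting with \<open>\<alpha>\<close>, \<open>\<beta>\<close> and with each other,
  \<open>[\<beta>\<beta>' a\<^sub>\<lambda> \<alpha>\<alpha>' b]' = [\<beta>(\<alpha>'\<beta>' a)\<^sub>\<lambda> \<alpha>(\<alpha>'\<beta>' b)]\<close>.
  So skew-symmetry of the new bracket is the old one at \<open>\<alpha>'\<beta>' a, \<alpha>'\<beta>' b\<close>, and the new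
  BiHom-Jacobi identity is the old one at \<open>\<alpha>'\<^sup>2\<beta>' a, \<alpha>'\<beta>' b, \<beta>'\<^sup>2 c\<close>. The remaining axioms
  survive twisting by even linear maps commuting with \<open>\<partial>\<close>.\<close>

definition bracket_hom :: "('a \<Rightarrow> 'a \<Rightarrow> nat \<Rightarrow> 'a) \<Rightarrow> ('a \<Rightarrow> 'a) \<Rightarrow> bool" where
  "bracket_hom br f \<longleftrightarrow> (\<forall>a b n. f (br a b n) = br (f a) (f b) n)"

definition even_map :: "(bool \<Rightarrow> 'a set) \<Rightarrow> ('a \<Rightarrow> 'a) \<Rightarrow> bool" where
  "even_map Rg f \<longleftrightarrow> (\<forall>p. \<forall>a\<in>Rg p. f a \<in> Rg p)"

definition conformal_bracket ::
  "(complex \<Rightarrow> 'a::ab_group_add \<Rightarrow> 'a) \<Rightarrow> ('a \<Rightarrow> 'a) \<Rightarrow> (bool \<Rightarrow> 'a set) \<Rightarrow>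
   ('a \<Rightarrow> 'a \<Rightarrow> nat \<Rightarrow> 'a) \<Rightarrow> bool" where
  "conformal_bracket scale D Rg br \<longleftrightarrow>
     (\<forall>a b. fin_supp (br a b)) \<and>
     (\<forall>a b c. br (a + b) c = (\<lambda>n. br a c n + br b c n)) \<and>
     (\<forall>a b c. br a (b + c) = (\<lambda>n. br a b n + br a c n)) \<and>
     (\<forall>k a b. br (scale k a) b = (\<lambda>n. scale k (br a b n))) \<and>
     (\<forall>k a b. br a (scale k b) = (\<lambda>n. scale k (br a b n))) \<and>
     (\<forall>p q. \<forall>a\<in>Rg p. \<forall>b\<in>Rg q. \<forall>n. br a b n \<in> Rg (p \<noteq> q)) \<and>
     (\<forall>a b. br (D a) b = (\<lambda>n. - lam_mul (br a b) n)) \<and>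
     (\<forall>a b. br a (D b) = (\<lambda>n. D (br a b n) + lam_mul (br a b) n))"

definition bihom_skew ::
  "(complex \<Rightarrow> 'a::ab_group_add \<Rightarrow> 'a) \<Rightarrow> ('a \<Rightarrow> 'a) \<Rightarrow> (bool \<Rightarrow> 'a set) \<Rightarrow>
   ('a \<Rightarrow> 'a \<Rightarrow> nat \<Rightarrow> 'a) \<Rightarrow> ('a \<Rightarrow> 'a) \<Rightarrow> ('a \<Rightarrow> 'a) \<Rightarrow> bool" where
  "bihom_skew scale D Rg br \<alpha> \<beta> \<longleftrightarrow>
     (\<forall>p q. \<forall>a\<in>Rg p. \<forall>b\<in>Rg q.
        br (\<beta> a) (\<alpha> b) = (\<lambda>n. scale (- sgn2 p q) (neg_lam_D scale D (br (\<beta> b) (\<alpha> a)) n)))"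

definition bihom_jacobi ::
  "(complex \<Rightarrow> 'a::ab_group_add \<Rightarrow> 'a) \<Rightarrow> (bool \<Rightarrow> 'a set) \<Rightarrow>
   ('a \<Rightarrow> 'a \<Rightarrow> nat \<Rightarrow> 'a) \<Rightarrow> ('a \<Rightarrow> 'a) \<Rightarrow> ('a \<Rightarrow> 'a) \<Rightarrow> bool" where
  "bihom_jacobi scale Rg br \<alpha> \<beta> \<longleftrightarrow>
     (\<forall>p q r. \<forall>a\<in>Rg p. \<forall>b\<in>Rg q. \<forall>c\<in>Rg r. \<forall>i j.
        br (\<alpha> (\<beta> a)) (br b c j) i =
          jac_left scale br (\<beta> a) b (\<beta> c) i j
          + scale (sgn2 p q) (br (\<beta> b) (br (\<alpha> a) c i) j))"

lemma BiHom_LCSA_iff: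
  "BiHom_LCSA scale D Rg br \<alpha> \<beta> \<longleftrightarrow>
     graded_Dmodule scale D Rg \<and>
     Vector_Spaces.linear scale scale \<alpha> \<and> Vector_Spaces.linear scale scale \<beta> \<and>
     \<alpha> \<circ> \<beta> = \<beta> \<circ> \<alpha> \<and> \<alpha> \<circ> D = D \<circ> \<alpha> \<and> \<beta> \<circ> D = D \<circ> \<beta> \<and>
     bracket_hom br \<alpha> \<and> bracket_hom br \<beta> \<and>
     conformal_bracket scale D Rg br \<and>
     bihom_skew scale D Rg br \<alpha> \<beta> \<and> bihom_jacobi scale Rg br \<alpha> \<beta>"
  unfolding BiHom_LCSA_def conformal_bracket_def bracket_hom_def bihom_skew_def bihom_jacobi_def
  by argo

lemma even_conf_hom_iff:
  "even_conf_hom scale D Rg br f \<longleftrightarrow>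
     Vector_Spaces.linear scale scale f \<and> f \<circ> D = D \<circ> f \<and> even_map Rg f \<and> bracket_hom br f"
  unfolding even_conf_hom_def even_map_def bracket_hom_def ..

lemma bracket_hom_comp:
  "bracket_hom br f \<Longrightarrow> bracket_hom br g \<Longrightarrow> bracket_hom br (f \<circ> g)"
  unfolding bracket_hom_def by simp

lemma bracket_hom_twist:
  assumes "bracket_hom br h" and "h \<circ> f = f \<circ> h" and "h \<circ> g = g \<circ> h"
  shows "bracket_hom (\<lambda>a b. br (f a) (g b)) h"
  using assms unfolding bracket_hom_def by (simp add: fun_eq_iff)

lemma conformal_bracket_twist:
  assumes br: "conformal_bracket scale D Rg br"
    and f: "Vector_Spaces.linear scale scale f" "f \<circ> D = D \<circ> f" "even_map Rg f"
    and g: "Vector_Spaces.linear scale scale g" "g \<circ> D = D \<circ> g" "even_map Rg g"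
  shows "conformal_bracket scale D Rg (\<lambda>a b. br (f a) (g b))"
proof -
  have "f (x + y) = f x + f y" "f (scale k x) = scale k (f x)" "f (D x) = D (f x)"
    and "g (x + y) = g x + g y" "g (scale k x) = scale k (g x)" "g (D x) = D (g x)" for x y k
    using f g by (simp_all add: Vector_Spaces.linear_iff fun_eq_iff)
  then show ?thesis
    using br f(3) g(3) unfolding conformal_bracket_def even_map_def by simp
qed

lemma jac_left_twist:
  assumes "bracket_hom br f"
  shows "jac_left scale (\<lambda>a b. br (f a) (g b)) x y z i j = jac_left scale br (f (f x)) (f (g y)) (g z) i j"
  using assms unfolding jac_left_def bracket_hom_def by simp

lemma bihom_skew_twist:
  assumes "bihom_skew scale D Rg br \<alpha> \<beta>" and "even_map Rg f" and "even_map Rg g"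
    and "\<beta> \<circ> f = f \<circ> \<beta>" and "\<alpha> \<circ> g = g \<circ> \<alpha>" and "f \<circ> g = g \<circ> f"
  shows "bihom_skew scale D Rg (\<lambda>a b. br (f a) (g b)) (\<alpha> \<circ> f) (\<beta> \<circ> g)"
  unfolding bihom_skew_def
proof (intro allI ballI)
  fix p q a b
  assume "a \<in> Rg p" and "b \<in> Rg q"
  then have "f (g a) \<in> Rg p" and "f (g b) \<in> Rg q"
    using assms(2,3) unfolding even_map_def by blast+
  then have "br (\<beta> (f (g a))) (\<alpha> (f (g b))) =
      (\<lambda>n. scale (- sgn2 p q) (neg_lam_D scale D (br (\<beta> (f (g b))) (\<alpha> (f (g a)))) n))"
    using assms(1) unfolding bihom_skew_def by blast
  moreover have "f (\<beta> (g x)) = \<beta> (f (g x))" and "g (\<alpha> (f x)) = \<alpha> (f (g x))" for x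
    using assms(4-6) by (metis comp_apply)+
  ultimately show "br (f ((\<beta> \<circ> g) a)) (g ((\<alpha> \<circ> f) b)) =
      (\<lambda>n. scale (- sgn2 p q) (neg_lam_D scale D (br (f ((\<beta> \<circ> g) b)) (g ((\<alpha> \<circ> f) a))) n))"
    by simp
qed

lemma bihom_jacobi_twist:
  assumes "bihom_jacobi scale Rg br \<alpha> \<beta>"
    and "bracket_hom br f" and "bracket_hom br g" and "even_map Rg f" and "even_map Rg g"
    and "\<alpha> \<circ> f = f \<circ> \<alpha>" and "\<alpha> \<circ> g = g \<circ> \<alpha>" and "\<beta> \<circ> f = f \<circ> \<beta>" and "\<beta> \<circ> g = g \<circ> \<beta>"
    and "f \<circ> g = g \<circ> f"
  shows "bihom_jacobi scale Rg (\<lambda>a b. br (f a) (g b)) (\<alpha> \<circ> f) (\<beta> \<circ> g)"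
  unfolding bihom_jacobi_def
proof (intro allI ballI)
  fix p q r a b c i j
  assume "a \<in> Rg p" and "b \<in> Rg q" and "c \<in> Rg r"
  then have "f (f (g a)) \<in> Rg p" and "f (g b) \<in> Rg q" and "g (g c) \<in> Rg r"
    using assms(4,5) unfolding even_map_def by blast+
  then have "br (\<alpha> (\<beta> (f (f (g a))))) (br (f (g b)) (g (g c)) j) i =
      jac_left scale br (\<beta> (f (f (g a)))) (f (g b)) (\<beta> (g (g c))) i j
      + scale (sgn2 p q) (br (\<beta> (f (g b))) (br (\<alpha> (f (f (g a)))) (g (g c)) i) j)"
    using assms(1) unfolding bihom_jacobi_def by blast
  then show "br (f ((\<alpha> \<circ> f) ((\<beta> \<circ> g) a))) (g (br (f b) (g c) j)) i =
      jac_left scale (\<lambda>a b. br (f a) (g b)) ((\<beta> \<circ> g) a) b ((\<beta> \<circ> g) c) i j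
      + scale (sgn2 p q) (br (f ((\<beta> \<circ> g) b)) (g (br (f ((\<alpha> \<circ> f) a)) (g c) i)) j)"
    using assms(2,3,6-10) by (simp add: jac_left_twist fun_eq_iff bracket_hom_def)
qed

theorem mainTheorem2:
  fixes scale :: "complex \<Rightarrow> 'a::ab_group_add \<Rightarrow> 'a"
    and D :: "'a \<Rightarrow> 'a" and Rg :: "bool \<Rightarrow> 'a set"
    and br :: "'a \<Rightarrow> 'a \<Rightarrow> nat \<Rightarrow> 'a"
    and \<alpha> \<beta> \<alpha>' \<beta>' :: "'a \<Rightarrow> 'a"
  assumes "BiHom_LCSA scale D Rg br \<alpha> \<beta>"
    and "even_conf_hom scale D Rg br \<alpha>'"
    and "even_conf_hom scale D Rg br \<beta>'"
    and "\<alpha> \<circ> \<beta> = \<beta> \<circ> \<alpha>" and "\<alpha> \<circ> \<alpha>' = \<alpha>' \<circ> \<alpha>" and "\<alpha> \<circ> \<beta>' = \<beta>' \<circ> \<alpha>"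
    and "\<beta> \<circ> \<alpha>' = \<alpha>' \<circ> \<beta>" and "\<beta> \<circ> \<beta>' = \<beta>' \<circ> \<beta>" and "\<alpha>' \<circ> \<beta>' = \<beta>' \<circ> \<alpha>'"
  shows "BiHom_LCSA scale D Rg (\<lambda>a b. br (\<alpha>' a) (\<beta>' b)) (\<alpha> \<circ> \<alpha>') (\<beta> \<circ> \<beta>')"
proof -
  have R: "graded_Dmodule scale D Rg"
      "Vector_Spaces.linear scale scale \<alpha>" "Vector_Spaces.linear scale scale \<beta>"
      "\<alpha> \<circ> D = D \<circ> \<alpha>" "\<beta> \<circ> D = D \<circ> \<beta>" "bracket_hom br \<alpha>" "bracket_hom br \<beta>"
      "conformal_bracket scale D Rg br" "bihom_skew scale D Rg br \<alpha> \<beta>" "bihom_jacobi scale Rg br \<alpha> \<beta>"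
    using assms(1) unfolding BiHom_LCSA_iff by blast+
  have \<alpha>': "Vector_Spaces.linear scale scale \<alpha>'" "\<alpha>' \<circ> D = D \<circ> \<alpha>'" "even_map Rg \<alpha>'" "bracket_hom br \<alpha>'"
    using assms(2) unfolding even_conf_hom_iff by blast+
  have \<beta>': "Vector_Spaces.linear scale scale \<beta>'" "\<beta>' \<circ> D = D \<circ> \<beta>'" "even_map Rg \<beta>'" "bracket_hom br \<beta>'"
    using assms(3) unfolding even_conf_hom_iff by blast+
  show ?thesis
    unfolding BiHom_LCSA_iff
  proof (intro conjI)
    show "graded_Dmodule scale D Rg"
      by (fact R(1))
    show "Vector_Spaces.linear scale scale (\<alpha> \<circ> \<alpha>')" "Vector_Spaces.linear scale scale (\<beta> \<circ> \<beta>')"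
      by (rule Vector_Spaces.linear_compose, fact, fact)+
    show "(\<alpha> \<circ> \<alpha>') \<circ> (\<beta> \<circ> \<beta>') = (\<beta> \<circ> \<beta>') \<circ> (\<alpha> \<circ> \<alpha>')"
      using assms(4-9) by (simp add: fun_eq_iff)
    show "(\<alpha> \<circ> \<alpha>') \<circ> D = D \<circ> (\<alpha> \<circ> \<alpha>')" "(\<beta> \<circ> \<beta>') \<circ> D = D \<circ> (\<beta> \<circ> \<beta>')"
      using R(4,5) \<alpha>'(2) \<beta>'(2) by (simp_all add: fun_eq_iff)
    show "bracket_hom (\<lambda>a b. br (\<alpha>' a) (\<beta>' b)) (\<alpha> \<circ> \<alpha>')"
      using bracket_hom_twist[OF R(6) assms(5,6)] bracket_hom_twist[OF \<alpha>'(4) refl assms(9)]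
      by (rule bracket_hom_comp)
    show "bracket_hom (\<lambda>a b. br (\<alpha>' a) (\<beta>' b)) (\<beta> \<circ> \<beta>')"
      using bracket_hom_twist[OF R(7) assms(7,8)] bracket_hom_twist[OF \<beta>'(4) assms(9)[symmetric] refl]
      by (rule bracket_hom_comp)
    show "conformal_bracket scale D Rg (\<lambda>a b. br (\<alpha>' a) (\<beta>' b))"
      using R(8) \<alpha>'(1-3) \<beta>'(1-3) by (rule conformal_bracket_twist)
    show "bihom_skew scale D Rg (\<lambda>a b. br (\<alpha>' a) (\<beta>' b)) (\<alpha> \<circ> \<alpha>') (\<beta> \<circ> \<beta>')"
      using R(9) \<alpha>'(3) \<beta>'(3) assms(7,6,9) by (rule bihom_skew_twist)
    show "bihom_jacobi scale Rg (\<lambda>a b. br (\<alpha>' a) (\<beta>' b)) (\<alpha> \<circ> \<alpha>') (\<beta> \<circ> \<beta>')"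
      using R(10) \<alpha>'(4) \<beta>'(4) \<alpha>'(3) \<beta>'(3) assms(5-9) by (rule bihom_jacobi_twist)
  qed
qed

end
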